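(* Let $\mathbf{E},\mathbf{Y}$ be Euclidean spaces, $\mathcal{X}\subset\mathbf{E}$ nonempty closed convex, $h\colon\mathbf{Y}\to\mathbb{R}$ convex, $F\colon\mathbf{E}\to\mathbf{Y}$ continuously differentiable, $f=h\circ F$, $f_x(y)=h(F(x)+\nabla F(x)(y-x))$, and $\partial f(x)=\nabla F(x)^*\partial h(F(x))$. Assume $\mathcal{X}^*=\operatorname{argmin}_{\mathcal{X}}f\ne\emptyset$, $f(x)-\min_{\mathcal{X}}f\ge\mu\,\mathrm{dist}(x,\mathcal{X}^* )$ for all $x\in\mathcal{X}$, and $|f(y)-f_x(y)|\le a\|y-x\|^2+b\|y-x\|$ for all $x,y\in\mathcal{X}$, where $a>0$, $b\ge0$ and $\mu>2b$. Let $L:=\sup\{\|\zeta\|:\zeta\in\partial f(x),\,x\in\mathcal{X},\,\mathrm{dist}(x,\mathcal{X}^* )\le\frac{\mu-2b}{2a}\}$, assumed finite and positive. Let $\gamma\in(0,1)$ and let $x_0\in\mathcal{X}$ satisfy $\mathrm{dist}(x_0,\mathcal{X}^* )\le\gamma\frac{\mu-2b}{2a}$. Then the iterates of the Polyak subgradient method started at $x_0$ satisfy $$\mathrm{dist}^2(x_{k+1},\mathcal{X}^* )\le\Big(1-\frac{(1-\gamma)\mu(\mu-2b)}{L^2}\Big)\mathrm{dist}^2(x_k,\mathcal{X}^* )\quad\forall k\ge0.$$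
   Context: $\|\cdot\|$ is the Euclidean norm, $\mathrm{dist}$ the Euclidean distance, $\mathrm{proj}_{\mathcal{X}}$ the Euclidean projection, $\nabla F(x)^*$ the adjoint of the Jacobian, and $\partial h$ the convex subdifferential. Polyak subgradient method: given $x_k$, choose $\zeta_k\in\partial f(x_k)$; if $\zeta_k=0$ set $x_{k+1}=x_k$, otherwise $x_{k+1}=\mathrm{proj}_{\mathcal{X}}\big(x_k-\frac{f(x_k)-\min_{\mathcal{X}}f}{\|\zeta_k\|^2}\zeta_k\big)$. *)

theory Defs
  imports "HOL-Analysis.Analysis"
begin

definition convex_subdiff :: "('y::real_inner \<Rightarrow> real) \<Rightarrow> 'y \<Rightarrow> 'y set" where
  "convex_subdiff h w = {v. \<forall>z. h z \<ge> h w + v \<bullet> (z - w)}"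

definition comp_subdiff ::
  "('y::euclidean_space \<Rightarrow> real) \<Rightarrow> ('e::euclidean_space \<Rightarrow> 'y) \<Rightarrow> ('e \<Rightarrow> ('e \<Rightarrow>\<^sub>L 'y)) \<Rightarrow> 'e \<Rightarrow> 'e set" where
  "comp_subdiff h F DF x = adjoint (blinfun_apply (DF x)) ` convex_subdiff h (F x)"

definition argmin_on :: "('e \<Rightarrow> real) \<Rightarrow> 'e set \<Rightarrow> 'e set" where
  "argmin_on f X = {x \<in> X. \<forall>y\<in>X. f x \<le> f y}"

end

theory Submission
  imports Defs
begin

text \<open>Let \<open>p\<close> be a minimiser nearest to the iterate \<open>x\<close> and \<open>d = dist(x, X\<^sup>*)\<close>. The subgradient
  inequality of \<open>h\<close> at \<open>F x\<close>, combined with the approximation bound at \<open>(x, p)\<close>, gives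
  \<open>\<zeta> \<bullet> (x - p) \<ge> (f x - min f) - a d\<^sup>2 - b d\<close>. Expanding \<open>\<parallel>x - t \<zeta> - p\<parallel>\<^sup>2\<close> at the Polyak step
  \<open>t = (f x - min f) / \<parallel>\<zeta>\<parallel>\<^sup>2\<close> and using sharpness \<open>f x - min f \<ge> \<mu> d\<close> together with
  \<open>2 a d \<le> \<gamma> (\<mu> - 2b)\<close> yields a decrease by at least \<open>(1 - \<gamma>) \<mu> (\<mu> - 2b) d\<^sup>2 / L\<^sup>2\<close>; the projection
  onto \<open>X\<close> is nonexpansive and fixes \<open>p\<close>. As the distance decreases, the iterates never leave the
  region where \<open>L\<close> bounds the subgradients, so the estimate holds at every step.\<close>

lemma comp_subdiff_linearization:
  assumes "v \<in> comp_subdiff h F DF p"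
  shows "h (F p) + v \<bullet> (q - p) \<le> h (F p + DF p (q - p))"
proof -
  obtain w where w: "w \<in> convex_subdiff h (F p)" and v: "v = adjoint (blinfun_apply (DF p)) w"
    using assms unfolding comp_subdiff_def by auto
  have "linear (blinfun_apply (DF p))"
    by (rule bounded_linear.linear[OF blinfun.bounded_linear_right])
  then have "v \<bullet> (q - p) = w \<bullet> DF p (q - p)"
    unfolding v by (simp add: adjoint_works inner_commute)
  moreover have "h (F p) + w \<bullet> ((F p + DF p (q - p)) - F p) \<le> h (F p + DF p (q - p))"
    using w unfolding convex_subdiff_def by blast
  ultimately show ?thesis by simp
qed

lemma closed_argmin_on:
  assumes "continuous_on X f" "closed X"
  shows "closed (argmin_on f X)"
proof (cases "X = {}")
  case False
  then have "argmin_on f X = (\<Inter>y\<in>X. {z \<in> X. f z \<le> f y})"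
    unfolding argmin_on_def by auto
  moreover have "closed {z \<in> X. f z \<le> f y}" for y
    using continuous_closed_preimage[OF assms closed_atMost, of "f y"] by (simp add: vimage_def Int_def)
  ultimately show ?thesis by auto
qed (simp add: argmin_on_def)

lemma argmin_on_imp_eq_Inf:
  assumes "p \<in> argmin_on f X"
  shows "f p = (INF z\<in>X. f z)"
  using assms unfolding argmin_on_def by (intro cInf_eq_minimum[symmetric]) auto

lemma dist_closest_point_step_le:
  fixes X :: "'a::euclidean_space set"
  assumes "closed X" "convex X" "p \<in> X"
  shows "(dist (closest_point X (x - t *\<^sub>R v)) p)\<^sup>2
           \<le> (dist x p)\<^sup>2 - 2 * t * (v \<bullet> (x - p)) + t\<^sup>2 * (norm v)\<^sup>2"
proof -
  have "dist (closest_point X (x - t *\<^sub>R v)) p \<le> dist (x - t *\<^sub>R v) p"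
    using closest_point_lipschitz[OF assms(2,1), of "x - t *\<^sub>R v" p] closest_point_self[OF assms(3)]
      assms(3) by auto
  then have "(dist (closest_point X (x - t *\<^sub>R v)) p)\<^sup>2 \<le> (norm ((x - p) - t *\<^sub>R v))\<^sup>2"
    by (simp add: power_mono dist_norm algebra_simps)
  also have "\<dots> = (dist x p)\<^sup>2 - 2 * t * (v \<bullet> (x - p)) + t\<^sup>2 * (norm v)\<^sup>2"
    unfolding dist_norm power2_norm_eq_inner
    by (simp add: inner_diff_left inner_diff_right inner_commute power2_eq_square algebra_simps)
  finally show ?thesis .
qed

lemma sharp_model_gap_eq_0:
  fixes a b d \<mu> :: real
  assumes "d \<ge> 0" "\<mu> * d \<le> a * d\<^sup>2 + b * d" "d \<le> (\<mu> - 2 * b) / (2 * a)"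
    and "a > 0" "b \<ge> 0" "\<mu> > 2 * b"
  shows "d = 0"
proof (rule ccontr)
  assume "d \<noteq> 0"
  with assms(1) have "d > 0" by simp
  moreover have "d * (\<mu> - b - a * d) \<le> 0"
    using assms(2) by (simp add: power2_eq_square algebra_simps)
  ultimately have "\<mu> - b \<le> a * d"
    by (simp add: mult_le_0_iff)
  moreover have "a * d \<le> (\<mu> - 2 * b) / 2"
    using assms(3,4) by (simp add: field_simps)
  ultimately show False using assms(5,6) by (simp add: field_simps)
qed

lemma polyak_decrease_arith:
  fixes a b d e \<gamma> ip L \<mu> n :: real
  assumes "d \<ge> 0" "e \<ge> \<mu> * d" "n > 0" "n \<le> L\<^sup>2" "ip \<ge> e - a * d\<^sup>2 - b * d"
    and "d \<le> \<gamma> * ((\<mu> - 2 * b) / (2 * a))"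
    and "a > 0" "b \<ge> 0" "\<mu> > 2 * b" "\<gamma> < 1"
  shows "d\<^sup>2 - 2 * (e / n) * ip + (e / n)\<^sup>2 * n \<le> (1 - (1 - \<gamma>) * \<mu> * (\<mu> - 2 * b) / L\<^sup>2) * d\<^sup>2"
proof -
  have "\<mu> * d \<ge> 0" using assms(1,8,9) by (intro mult_nonneg_nonneg) auto
  with assms(2) have e0: "e \<ge> 0" by linarith
  have L0: "L\<^sup>2 > 0" using assms(3,4) by linarith
  have "d\<^sup>2 - 2 * (e / n) * ip + (e / n)\<^sup>2 * n = d\<^sup>2 - (e / n) * (2 * ip - e)"
    using assms(3) by (simp add: power2_eq_square algebra_simps)
  have "2 * a * d \<le> \<gamma> * (\<mu> - 2 * b)" using assms(6,7) by (simp add: field_simps)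
  then have "d * (\<mu> - 2 * b - 2 * a * d) \<ge> d * ((1 - \<gamma>) * (\<mu> - 2 * b))"
    using assms(1) by (intro mult_left_mono) (auto simp: algebra_simps)
  then have gain: "2 * ip - e \<ge> d * ((1 - \<gamma>) * (\<mu> - 2 * b))"
    using assms(2,5) by (simp add: power2_eq_square algebra_simps)
  have "\<mu> * d / L\<^sup>2 \<le> e / n"
    using assms(2,3,4) e0 L0 by (meson divide_right_mono frac_le order.trans zero_le_power2)
  moreover have "d * ((1 - \<gamma>) * (\<mu> - 2 * b)) \<ge> 0" using assms(1,9,10) by auto
  ultimately have "(\<mu> * d / L\<^sup>2) * (d * ((1 - \<gamma>) * (\<mu> - 2 * b))) \<le> (e / n) * (2 * ip - e)"
    using gain e0 assms(3) by (meson mult_mono divide_nonneg_pos less_imp_le order.trans)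
  moreover have "d\<^sup>2 - (\<mu> * d / L\<^sup>2) * (d * ((1 - \<gamma>) * (\<mu> - 2 * b)))
      = (1 - (1 - \<gamma>) * \<mu> * (\<mu> - 2 * b) / L\<^sup>2) * d\<^sup>2"
    using L0 by (simp add: power2_eq_square field_simps)
  ultimately show ?thesis
    using \<open>d\<^sup>2 - 2 * (e / n) * ip + (e / n)\<^sup>2 * n = d\<^sup>2 - (e / n) * (2 * ip - e)\<close> by linarith
qed

locale polyak_sharp =
  fixes X :: "'e::euclidean_space set"
    and h :: "'y::euclidean_space \<Rightarrow> real"
    and F :: "'e \<Rightarrow> 'y"
    and DF :: "'e \<Rightarrow> ('e \<Rightarrow>\<^sub>L 'y)"
    and a b \<mu> \<gamma> :: real
  assumes X_closed: "closed X" and X_convex: "convex X"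
    and h_convex: "convex_on UNIV h"
    and F_deriv: "\<And>x. (F has_derivative blinfun_apply (DF x)) (at x)"
    and argmin_ne: "argmin_on (h \<circ> F) X \<noteq> {}"
    and sharp: "\<And>x. x \<in> X \<Longrightarrow>
        (h \<circ> F) x - (INF z\<in>X. (h \<circ> F) z) \<ge> \<mu> * infdist x (argmin_on (h \<circ> F) X)"
    and approx: "\<And>x y. x \<in> X \<Longrightarrow> y \<in> X \<Longrightarrow>
        \<bar>(h \<circ> F) y - h (F x + DF x (y - x))\<bar> \<le> a * (norm (y - x))\<^sup>2 + b * norm (y - x)"
    and a_pos: "a > 0" and b_nonneg: "b \<ge> 0" and mu_gt: "\<mu> > 2 * b"
    and L_bdd: "bdd_above {norm z | z y. z \<in> comp_subdiff h F DF y \<and> y \<in> X \<and>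
                   infdist y (argmin_on (h \<circ> F) X) \<le> (\<mu> - 2 * b) / (2 * a)}"
    and gamma_pos: "0 < \<gamma>" and gamma_lt: "\<gamma> < 1"
begin

abbreviation f :: "'e \<Rightarrow> real" where "f \<equiv> h \<circ> F"
abbreviation fmin :: real where "fmin \<equiv> (INF z\<in>X. f z)"
abbreviation Xstar :: "'e set" where "Xstar \<equiv> argmin_on f X"
abbreviation r :: real where "r \<equiv> (\<mu> - 2 * b) / (2 * a)"
abbreviation L :: real where
  "L \<equiv> Sup {norm z | z y. z \<in> comp_subdiff h F DF y \<and> y \<in> X \<and> infdist y Xstar \<le> r}"
abbreviation rate :: real where "rate \<equiv> 1 - (1 - \<gamma>) * \<mu> * (\<mu> - 2 * b) / L\<^sup>2"

definition polyak_update :: "'e \<Rightarrow> 'e \<Rightarrow> 'e" where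
  "polyak_update x \<zeta> =
     (if \<zeta> = 0 then x else closest_point X (x - ((f x - fmin) / (norm \<zeta>)\<^sup>2) *\<^sub>R \<zeta>))"

lemma rate_le_1: "rate \<le> 1"
proof -
  have "0 \<le> (1 - \<gamma>) * \<mu> * (\<mu> - 2 * b) / L\<^sup>2"
    using gamma_lt mu_gt b_nonneg by (intro divide_nonneg_nonneg mult_nonneg_nonneg) auto
  then show ?thesis by linarith
qed

lemma closed_Xstar: "closed Xstar"
proof -
  have "continuous_on UNIV F"
    by (rule has_derivative_continuous_on[of UNIV F "\<lambda>x. blinfun_apply (DF x)"]) (use F_deriv in auto)
  moreover have "continuous_on UNIV h"
    using convex_on_continuous[OF open_UNIV h_convex] .
  ultimately have "continuous_on X f"
    using continuous_on_compose continuous_on_subset subset_UNIV by metis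
  then show ?thesis using closed_argmin_on X_closed by blast
qed

lemma subgradient_model:
  assumes "x \<in> X" "p \<in> Xstar" "\<zeta> \<in> comp_subdiff h F DF x"
  shows "\<zeta> \<bullet> (x - p) \<ge> (f x - fmin) - a * (dist x p)\<^sup>2 - b * dist x p"
proof -
  have "p \<in> X" using assms(2) unfolding argmin_on_def by auto
  have "f x + \<zeta> \<bullet> (p - x) \<le> h (F x + DF x (p - x))"
    using comp_subdiff_linearization[OF assms(3)] by simp
  also have "\<dots> \<le> f p + a * (dist x p)\<^sup>2 + b * dist x p"
    using approx[OF assms(1) \<open>p \<in> X\<close>] by (simp add: dist_norm norm_minus_commute)
  finally show ?thesis
    using argmin_on_imp_eq_Inf[OF assms(2)] by (simp add: inner_diff_right)
qed

lemma polyak_update_contracts: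
  assumes "x \<in> X" "infdist x Xstar \<le> \<gamma> * r" "\<zeta> \<in> comp_subdiff h F DF x"
  shows "polyak_update x \<zeta> \<in> X \<and> (infdist (polyak_update x \<zeta>) Xstar)\<^sup>2 \<le> rate * (infdist x Xstar)\<^sup>2"
proof -
  obtain p where p: "p \<in> Xstar" and dp: "infdist x Xstar = dist x p"
    using infdist_attains_inf[OF closed_Xstar argmin_ne] by blast
  define d where "d = dist x p"
  have "p \<in> X" using p unfolding argmin_on_def by auto
  have d0: "d \<ge> 0" unfolding d_def by simp
  have d_close: "d \<le> \<gamma> * r" using assms(2) unfolding d_def dp .
  have "\<gamma> * r \<le> r"
    using gamma_pos gamma_lt mu_gt a_pos by (intro mult_left_le_one_le) auto
  with d_close have dr: "d \<le> r" by linarith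
  have gap: "f x - fmin \<ge> \<mu> * d" using sharp[OF assms(1)] unfolding d_def dp .
  have model: "\<zeta> \<bullet> (x - p) \<ge> (f x - fmin) - a * d\<^sup>2 - b * d"
    using subgradient_model[OF assms(1) p assms(3)] unfolding d_def .
  show ?thesis
  proof (cases "\<zeta> = 0")
    case True
    have "d = 0"
      using sharp_model_gap_eq_0[OF d0 _ dr a_pos b_nonneg mu_gt] gap model True by simp
    then show ?thesis using assms(1) True dp unfolding polyak_update_def d_def by simp
  next
    case False
    define t where "t = (f x - fmin) / (norm \<zeta>)\<^sup>2"
    have "infdist x Xstar \<le> r" using dr unfolding d_def dp .
    then have "norm \<zeta> \<in> {norm z | z y. z \<in> comp_subdiff h F DF y \<and> y \<in> X \<and> infdist y Xstar \<le> r}"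
      using assms(1,3) by blast
    then have "norm \<zeta> \<le> L" using L_bdd by (rule cSup_upper)
    then have nL: "(norm \<zeta>)\<^sup>2 \<le> L\<^sup>2" by (simp add: power_mono)
    have n0: "(norm \<zeta>)\<^sup>2 > 0" using False by simp
    have "(infdist (polyak_update x \<zeta>) Xstar)\<^sup>2 \<le> (dist (polyak_update x \<zeta>) p)\<^sup>2"
      using infdist_le[OF p, of "polyak_update x \<zeta>"] infdist_nonneg by (rule power_mono)
    also have "\<dots> \<le> d\<^sup>2 - 2 * t * (\<zeta> \<bullet> (x - p)) + t\<^sup>2 * (norm \<zeta>)\<^sup>2"
      using dist_closest_point_step_le[OF X_closed X_convex \<open>p \<in> X\<close>, of x t \<zeta>] False
      unfolding polyak_update_def d_def t_def[symmetric] by simp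
    also have "\<dots> \<le> rate * d\<^sup>2"
      unfolding t_def
      by (rule polyak_decrease_arith[OF d0 gap n0 nL model d_close a_pos b_nonneg mu_gt gamma_lt])
    finally have "(infdist (polyak_update x \<zeta>) Xstar)\<^sup>2 \<le> rate * (infdist x Xstar)\<^sup>2"
      unfolding d_def dp .
    moreover have "polyak_update x \<zeta> \<in> X"
      using closest_point_in_set[OF X_closed] \<open>p \<in> X\<close> False
      unfolding polyak_update_def by auto
    ultimately show ?thesis by blast
  qed
qed

lemma polyak_update_stays_close:
  assumes "x \<in> X" "infdist x Xstar \<le> \<gamma> * r" "\<zeta> \<in> comp_subdiff h F DF x"
  shows "polyak_update x \<zeta> \<in> X \<and> infdist (polyak_update x \<zeta>) Xstar \<le> \<gamma> * r"
proof -
  have "(infdist (polyak_update x \<zeta>) Xstar)\<^sup>2 \<le> rate * (infdist x Xstar)\<^sup>2"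
    and inX: "polyak_update x \<zeta> \<in> X"
    using polyak_update_contracts[OF assms] by auto
  moreover have "rate * (infdist x Xstar)\<^sup>2 \<le> (infdist x Xstar)\<^sup>2"
    using mult_right_mono[OF rate_le_1 zero_le_power2] by simp
  ultimately have "infdist (polyak_update x \<zeta>) Xstar \<le> infdist x Xstar"
    using infdist_nonneg by (meson order.trans power2_le_imp_le)
  with inX assms(2) show ?thesis by linarith
qed

end

theorem theorem7p6:
  fixes X :: "'e::euclidean_space set"
    and h :: "'y::euclidean_space \<Rightarrow> real"
    and F :: "'e \<Rightarrow> 'y"
    and DF :: "'e \<Rightarrow> ('e \<Rightarrow>\<^sub>L 'y)"
    and a b \<mu> \<gamma> :: real
    and x0 :: 'e
    and x \<zeta> :: "nat \<Rightarrow> 'e"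
  assumes X_ne: "X \<noteq> {}" and X_closed: "closed X" and X_convex: "convex X"
    and h_convex: "convex_on UNIV h"
    and F_deriv: "\<And>x. (F has_derivative blinfun_apply (DF x)) (at x)"
    and DF_cont: "continuous_on UNIV DF"
    and argmin_ne: "argmin_on (h \<circ> F) X \<noteq> {}"
    and sharp: "\<And>x. x \<in> X \<Longrightarrow>
        (h \<circ> F) x - (INF z\<in>X. (h \<circ> F) z) \<ge> \<mu> * infdist x (argmin_on (h \<circ> F) X)"
    and approx: "\<And>x y. x \<in> X \<Longrightarrow> y \<in> X \<Longrightarrow>
        \<bar>(h \<circ> F) y - h (F x + DF x (y - x))\<bar> \<le> a * (norm (y - x))\<^sup>2 + b * norm (y - x)"
    and a_pos: "a > 0" and b_nonneg: "b \<ge> 0" and mu_gt: "\<mu> > 2 * b"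
    and L_bdd: "bdd_above {norm z | z y. z \<in> comp_subdiff h F DF y \<and> y \<in> X \<and>
                   infdist y (argmin_on (h \<circ> F) X) \<le> (\<mu> - 2 * b) / (2 * a)}"
    and L_pos: "Sup {norm z | z y. z \<in> comp_subdiff h F DF y \<and> y \<in> X \<and>
                   infdist y (argmin_on (h \<circ> F) X) \<le> (\<mu> - 2 * b) / (2 * a)} > 0"
    and gamma: "0 < \<gamma>" "\<gamma> < 1"
    and x0_X: "x0 \<in> X"
    and x0_close: "infdist x0 (argmin_on (h \<circ> F) X) \<le> \<gamma> * ((\<mu> - 2 * b) / (2 * a))"
    and x_0: "x 0 = x0"
    and zeta_sub: "\<And>k. \<zeta> k \<in> comp_subdiff h F DF (x k)"
    and x_step: "\<And>k. x (Suc k) =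
        (if \<zeta> k = 0 then x k
         else closest_point X (x k - (((h \<circ> F) (x k) - (INF z\<in>X. (h \<circ> F) z)) / (norm (\<zeta> k))\<^sup>2) *\<^sub>R \<zeta> k))"
  shows "\<forall>k. (infdist (x (Suc k)) (argmin_on (h \<circ> F) X))\<^sup>2 \<le>
      (1 - (1 - \<gamma>) * \<mu> * (\<mu> - 2 * b) /
        (Sup {norm z | z y. z \<in> comp_subdiff h F DF y \<and> y \<in> X \<and>
                   infdist y (argmin_on (h \<circ> F) X) \<le> (\<mu> - 2 * b) / (2 * a)})\<^sup>2)
      * (infdist (x k) (argmin_on (h \<circ> F) X))\<^sup>2"
proof -
  interpret polyak_sharp X h F DF a b \<mu> \<gamma>
    using assms by unfold_locales
  have step: "x (Suc k) = polyak_update (x k) (\<zeta> k)" for k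
    using x_step unfolding polyak_update_def by simp
  have close: "x k \<in> X \<and> infdist (x k) Xstar \<le> \<gamma> * r" for k
  proof (induction k)
    case 0
    show ?case unfolding x_0 using x0_X x0_close ..
  next
    case (Suc k)
    then show ?case unfolding step using polyak_update_stays_close zeta_sub by blast
  qed
  show ?thesis unfolding step using polyak_update_contracts close zeta_sub by blast
qed

end
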